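(* Let $\beta\in\mathbb{R}$ and $\psi\in B\cap\Theta_1$, and suppose that either $\Delta^2(1/\psi(k))\ge0$ for all $k\in\mathbb{N}$, or $\Delta^2(1/\psi(k))\le0$ for all $k\in\mathbb{N}$. Then there exist positive quantities $K^{(1)}_\psi$, $K^{(2)}_\psi$, depending only on $\psi$, such that for all $n\in\mathbb{N}$ $$K^{(2)}_\psi\,\psi(n)\,n\le E_n\big(C^{\psi}_{\beta,1}\big)_C\le\mathcal{E}_n\big(C^{\psi}_{\beta,1}\big)_C\le K^{(1)}_\psi\,\psi(n)\,n.$$
   Context: All functions are $2\pi$-periodic. $L_p$ ($1\le p\le\infty$) is the space of $2\pi$-periodic measurable functions with finite norm $\|f\|_p=\big(\int_0^{2\pi}|f|^p\big)^{1/p}$ for $p<\infty$ and $\|f\|_\infty=\operatorname{ess\,sup}|f|$; $C$ is the space of continuous $2\pi$-periodic functions with $\|f\|_C=\max|f|$. Let $\psi(t)>0$ be a continuous function of $t\ge1$; $\psi(k)$ denotes its values at positive integers, and $\Delta^2(1/\psi(k))=\frac1{\psi(k)}-\frac2{\psi(k+1)}+\frac1{\psi(k+2)}$. For $\beta\in\mathbb{R}$, $\Psi_\beta$ is the summable function with Fourier series $\sum_{k=1}^\infty\psi(k)\cos(kt-\beta\pi/2)$. When $\Psi_\beta\in L_\infty$, $C^{\psi}_{\beta,1}$ denotes the class of (continuous) functions $f(x)=\frac{a_0}{2}+\frac1\pi\int_{-\pi}^{\pi}\Psi_\beta(x-t)\varphi(t)\,dt$ with $a_0\in\mathbb{R}$,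 $\int_{-\pi}^{\pi}\varphi=0$, $\|\varphi\|_1\le1$. $\mathcal{T}_{2n-1}$ is the space of trigonometric polynomials of degree at most $n-1$, $S_{n-1}(f)$ is the Fourier partial sum of order $n-1$, $\mathcal{E}_n(C^{\psi}_{\beta,1})_C=\sup_{f\in C^{\psi}_{\beta,1}}\|f-S_{n-1}(f)\|_C$, $E_n(C^{\psi}_{\beta,1})_C=\sup_{f\in C^{\psi}_{\beta,1}}\inf_{t\in\mathcal{T}_{2n-1}}\|f-t\|_C$. $B$ is the set of positive nonincreasing functions $\psi$ on $[1,\infty)$ with $\psi(t)/\psi(2t)\le K$ for some constant $K$ and all $t\ge1$. $\Theta_1$ is the set of nonincreasing functions $\psi$ on $[1,\infty)$ for which there exists $\alpha>1$ and $K>0$ with $t_1^\alpha\psi(t_1)\le K t_2^\alpha\psi(t_2)$ for all $t_1>t_2\ge1$. *)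

theory Defs
  imports "HOL-Analysis.Analysis"
begin

definition class_B :: "(real \<Rightarrow> real) set" where
  "class_B = {\<psi>. (\<forall>t\<ge>1. \<psi> t > 0) \<and> (\<forall>s t. 1 \<le> s \<and> s \<le> t \<longrightarrow> \<psi> t \<le> \<psi> s) \<and>
                 (\<exists>K. \<forall>t\<ge>1. \<psi> t / \<psi> (2 * t) \<le> K)}"

definition class_Theta1 :: "(real \<Rightarrow> real) set" where
  "class_Theta1 = {\<psi>. (\<forall>s t. 1 \<le> s \<and> s \<le> t \<longrightarrow> \<psi> t \<le> \<psi> s) \<and>
      (\<exists>\<alpha> K. \<alpha> > 1 \<and> K > 0 \<and>
         (\<forall>t1 t2. t1 > t2 \<and> t2 \<ge> 1 \<longrightarrow> t1 powr \<alpha> * \<psi> t1 \<le> K * (t2 powr \<alpha> * \<psi> t2)))}"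

definition Delta2_inv :: "(real \<Rightarrow> real) \<Rightarrow> nat \<Rightarrow> real" where
  "Delta2_inv \<psi> k = 1 / \<psi> (real k) - 2 / \<psi> (real (k + 1)) + 1 / \<psi> (real (k + 2))"

definition Psi_kernel :: "(real \<Rightarrow> real) \<Rightarrow> real \<Rightarrow> real \<Rightarrow> real" where
  "Psi_kernel \<psi> \<beta> t = (\<Sum>k. \<psi> (real (Suc k)) * cos (real (Suc k) * t - \<beta> * pi / 2))"

definition C_class :: "(real \<Rightarrow> real) \<Rightarrow> real \<Rightarrow> (real \<Rightarrow> real) set" where
  "C_class \<psi> \<beta> = {f. \<exists>a0 \<phi>. (\<forall>x. \<phi> (x + 2 * pi) = \<phi> x) \<and>
        \<phi> absolutely_integrable_on {-pi..pi} \<and>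
        integral {-pi..pi} \<phi> = 0 \<and>
        integral {-pi..pi} (\<lambda>t. \<bar>\<phi> t\<bar>) \<le> 1 \<and>
        (\<forall>x. f x = a0 / 2 + (1 / pi) * integral {-pi..pi} (\<lambda>t. Psi_kernel \<psi> \<beta> (x - t) * \<phi> t))}"

definition fourier_cos :: "(real \<Rightarrow> real) \<Rightarrow> nat \<Rightarrow> real" where
  "fourier_cos f k = (1 / pi) * integral {-pi..pi} (\<lambda>t. f t * cos (real k * t))"

definition fourier_sin :: "(real \<Rightarrow> real) \<Rightarrow> nat \<Rightarrow> real" where
  "fourier_sin f k = (1 / pi) * integral {-pi..pi} (\<lambda>t. f t * sin (real k * t))"

definition fourier_partial_sum :: "(real \<Rightarrow> real) \<Rightarrow> nat \<Rightarrow> real \<Rightarrow> real" where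
  "fourier_partial_sum f m x = fourier_cos f 0 / 2 +
     (\<Sum>k=1..m. fourier_cos f k * cos (real k * x) + fourier_sin f k * sin (real k * x))"

definition trig_polys :: "nat \<Rightarrow> (real \<Rightarrow> real) set" where
  "trig_polys m = {p. \<exists>a b :: nat \<Rightarrow> real. \<forall>x.
      p x = a 0 + (\<Sum>k=1..m. a k * cos (real k * x) + b k * sin (real k * x))}"

text \<open>Uniform norm (extended-real valued, so that unboundedness is not hidden).\<close>
definition sup_norm :: "(real \<Rightarrow> real) \<Rightarrow> ereal" where
  "sup_norm g = (SUP x. ereal \<bar>g x\<bar>)"

definition Fourier_error :: "(real \<Rightarrow> real) \<Rightarrow> real \<Rightarrow> nat \<Rightarrow> ereal" where
  "Fourier_error \<psi> \<beta> n =
     (SUP f\<in>C_class \<psi> \<beta>. sup_norm (\<lambda>x. f x - fourier_partial_sum f (n - 1) x))"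

definition best_approx :: "(real \<Rightarrow> real) \<Rightarrow> real \<Rightarrow> nat \<Rightarrow> ereal" where
  "best_approx \<psi> \<beta> n =
     (SUP f\<in>C_class \<psi> \<beta>. INF p\<in>trig_polys (n - 1). sup_norm (\<lambda>x. f x - p x))"

end

theory Submission
  imports Defs
begin

text \<open>If \<open>f = a0/2 + (1/\<pi>) \<integral> \<Psi>\<^sub>\<beta>(x - t) \<phi>(t) dt\<close> with \<open>\<integral> |\<phi>| \<le> 1\<close>, then \<open>f - fourier_partial_sum f (n - 1)\<close> is the
  convolution of \<open>\<phi>\<close> with the tail \<open>\<Sum>k\<ge>n. \<psi>(k) cos (k t - \<beta>\<pi>/2)\<close> of the kernel, so it is bounded by
  \<open>\<Sum>k\<ge>n. \<psi>(k)\<close>. In the class \<open>\<Theta>\<^sub>1\<close> the function \<open>t powr \<alpha> * \<psi>(t)\<close> is almost decreasing for some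
  \<open>\<alpha> > 1\<close>, and comparing with \<open>\<integral> t powr -\<alpha>\<close> bounds this tail by a multiple of \<open>n \<psi>(n)\<close>.

  For the lower estimate take for \<open>\<phi>\<close> the Fejer kernel of order \<open>n - 1\<close> modulated by \<open>cos (2n t)\<close>
  and normalised in \<open>L\<^sub>1\<close>. Then \<open>f\<close> is a cosine polynomial with frequencies in \<open>[n + 1, 3n - 1]\<close>
  whose coefficients are \<open>\<psi>(k)\<close> times a triangular weight. Integrating \<open>f - p\<close> against the same
  modulated Fejer kernel annihilates every trigonometric polynomial \<open>p\<close> of degree below \<open>n\<close> and
  shows \<open>sup |f - p| \<ge> c n \<psi>(4n)\<close>, which the doubling condition of the class \<open>B\<close> turns into
  \<open>c' n \<psi>(n)\<close>.\<close>

section \<open>Trigonometric integrals\<close>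

lemma has_integral_cos_int_mult:
  fixes j :: int
  shows "((\<lambda>x. cos (of_int j * x - d)) has_integral (if j = 0 then 2*pi*cos d else 0)) {-pi..pi}"
proof (cases "j = 0")
  case True
  then show ?thesis using has_integral_const_real[of "cos d" "-pi" pi] by (simp add: algebra_simps)
next
  case False
  have d: "((\<lambda>x. sin (of_int j * x - d) / of_int j) has_real_derivative cos (of_int j * x - d)) (at x within {-pi..pi})" for x
    using False by (auto intro!: derivative_eq_intros)
  have sin_period: "sin (y + 2 * pi * of_int j) = sin y" for y
    by (simp add: sin_add)
  have "((\<lambda>x. cos (of_int j * x - d)) has_integral
          (sin (of_int j * pi - d) / of_int j - sin (of_int j * (-pi) - d) / of_int j)) {-pi..pi}"
    by (rule fundamental_theorem_of_calculus) (auto simp: has_real_derivative_iff_has_vector_derivative[symmetric] intro: d)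
  moreover have "sin (of_int j * pi - d) = sin (of_int j * (-pi) - d)"
    using sin_period[of "of_int j * (-pi) - d"] by (simp add: algebra_simps)
  ultimately show ?thesis using False by simp
qed

lemma cos_orthogonality:
  fixes k L :: nat assumes "L \<ge> 1"
  shows "((\<lambda>x. cos (real k * x - a) * cos (real L * x - b)) has_integral
          (if k = L then pi * cos (a - b) else 0)) {-pi..pi}"
proof -
  have eq: "cos (real k * x - a) * cos (real L * x - b) =
     cos (of_int (int k - int L) * x - (a - b)) / 2 + cos (of_int (int k + int L) * x - (a + b)) / 2" for x
    unfolding cos_times_cos by (simp add: algebra_simps add_divide_distrib)
  have 1: "((\<lambda>x. cos (of_int (int k - int L) * x - (a - b)) / 2) has_integral
        (if k = L then pi * cos (a - b) else 0)) {-pi..pi}"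
    using has_integral_divide[OF has_integral_cos_int_mult[of "int k - int L" "a - b"], of 2] by auto
  have 2: "((\<lambda>x. cos (of_int (int k + int L) * x - (a + b)) / 2) has_integral 0) {-pi..pi}"
    using has_integral_divide[OF has_integral_cos_int_mult[of "int k + int L" "a + b"], of 2] assms by auto
  show ?thesis unfolding eq using has_integral_add[OF 1 2] by simp
qed

lemma sin_eq_cos_minus_pi_half: "sin y = cos (y - pi / 2)"
  by (simp add: cos_diff)

lemma cos_nat_mult_periodic: "cos (real j * (t + 2 * pi)) = cos (real j * t)"
proof -
  have "real j * (t + 2 * pi) = real j * t + 2 * pi * of_int (int j)" by (simp add: algebra_simps)
  then show ?thesis using cos_int_2pin[of "int j"] sin_int_2pin[of "int j"] by (simp add: cos_add)
qed

section \<open>The Fejer kernel\<close>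

definition dirichlet_kernel :: "nat \<Rightarrow> real \<Rightarrow> real" where
  "dirichlet_kernel l x = 1 + 2 * (\<Sum>j=1..l. cos (real j * x))"

text \<open>The sum of the Dirichlet kernels of orders \<open>0..m\<close>, i.e. \<open>m + 1\<close> times the usual Fejer
  kernel.\<close>
definition fejer_kernel :: "nat \<Rightarrow> real \<Rightarrow> real" where
  "fejer_kernel m x = real m + 1 + 2 * (\<Sum>j=1..m. (real m + 1 - real j) * cos (real j * x))"

lemma dirichlet_kernel_mult_one_minus_cos: "dirichlet_kernel l x * (1 - cos x) = cos (real l * x) - cos (real (Suc l) * x)"
proof (induction l)
  case 0
  then show ?case by (simp add: dirichlet_kernel_def)
next
  case (Suc l)
  have "dirichlet_kernel (Suc l) x = dirichlet_kernel l x + 2 * cos (real (Suc l) * x)"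
    by (simp add: dirichlet_kernel_def)
  moreover have "2 * cos (real (Suc l) * x) * (1 - cos x) =
      2 * cos (real (Suc l) * x) - cos (real (Suc (Suc l)) * x) - cos (real l * x)"
  proof -
    have a: "real (Suc (Suc l)) * x = real (Suc l) * x + x" "real l * x = real (Suc l) * x - x"
      by (simp_all add: algebra_simps)
    show ?thesis unfolding a cos_add cos_diff by (simp add: algebra_simps)
  qed
  ultimately show ?case using Suc by (simp add: algebra_simps)
qed

lemma fejer_kernel_Suc: "fejer_kernel (Suc m) x = fejer_kernel m x + dirichlet_kernel (Suc m) x"
proof -
  have "(\<Sum>j=1..Suc m. (real (Suc m) + 1 - real j) * cos (real j * x)) =
        (\<Sum>j=1..m. (real (Suc m) + 1 - real j) * cos (real j * x)) + cos (real (Suc m) * x)"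
    by simp
  also have "(\<Sum>j=1..m. (real (Suc m) + 1 - real j) * cos (real j * x)) =
        (\<Sum>j=1..m. (real m + 1 - real j) * cos (real j * x)) + (\<Sum>j=1..m. cos (real j * x))"
    by (simp add: sum.distrib[symmetric] algebra_simps)
  finally show ?thesis unfolding fejer_kernel_def dirichlet_kernel_def by (simp add: algebra_simps)
qed

lemma fejer_kernel_mult_one_minus_cos: "fejer_kernel m x * (1 - cos x) = 1 - cos (real (Suc m) * x)"
proof (induction m)
  case 0
  then show ?case by (simp add: fejer_kernel_def)
next
  case (Suc m)
  then show ?case unfolding fejer_kernel_Suc distrib_right dirichlet_kernel_mult_one_minus_cos by simp
qed

lemma cos_nat_mult_eq_1: "cos x = 1 \<Longrightarrow> cos (real j * x) = 1"
proof (induction j)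
  case (Suc j)
  have "sin x = 0" using Suc.prems sin_cos_squared_add[of x] by (simp add: power2_eq_square)
  then show ?case using Suc by (simp add: distrib_right cos_add)
qed simp

lemma fejer_kernel_nonneg: "fejer_kernel m x \<ge> 0"
proof (cases "cos x = 1")
  case True
  then have "(\<Sum>j=1..m. (real m + 1 - real j) * cos (real j * x)) \<ge> 0"
    by (intro sum_nonneg) (simp add: cos_nat_mult_eq_1)
  then show ?thesis unfolding fejer_kernel_def by simp
next
  case False
  then have "1 - cos x > 0" using cos_le_one[of x] by linarith
  moreover have "fejer_kernel m x * (1 - cos x) \<ge> 0" unfolding fejer_kernel_mult_one_minus_cos using cos_le_one by simp
  ultimately show ?thesis by (simp add: zero_le_mult_iff)
qed

lemma continuous_on_fejer_kernel: "continuous_on S (fejer_kernel m)"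
  unfolding fejer_kernel_def[abs_def] by (auto intro!: continuous_intros)

lemma has_integral_fejer_kernel: "(fejer_kernel m has_integral 2 * pi * (real m + 1)) {-pi..pi}"
proof -
  have c0: "((\<lambda>x. cos (real j * x)) has_integral 0) {-pi..pi}" if "j \<in> {1..m}" for j
    using has_integral_cos_int_mult[of "int j" 0] that by simp
  have "((\<lambda>x. (real m + 1) + 2 * (\<Sum>j=1..m. (real m + 1 - real j) * cos (real j * x))) has_integral
      (real m + 1) * (2 * pi) + 2 * (\<Sum>j=1..m. (real m + 1 - real j) * 0)) {-pi..pi}"
    using has_integral_const_real[of "real m + 1" "-pi" pi]
    by (intro has_integral_add has_integral_mult_right has_integral_sum c0) (auto simp: algebra_simps)
  then show ?thesis unfolding fejer_kernel_def[abs_def] by (simp add: algebra_simps)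
qed

lemma fejer_kernel_periodic: "fejer_kernel m (t + 2 * pi) = fejer_kernel m t"
  unfolding fejer_kernel_def by (simp only: cos_nat_mult_periodic)

text \<open>The coefficient of \<open>cos (k x - b)\<close> in \<open>fejer_kernel m x * cos (N x - b)\<close> when \<open>m < N\<close>:
  a triangle of height \<open>m + 1\<close> centred at \<open>N\<close>.\<close>
definition fejer_weight :: "nat \<Rightarrow> nat \<Rightarrow> nat \<Rightarrow> real" where
  "fejer_weight N m k = max 0 (real m + 1 - \<bar>real k - real N\<bar>)"

lemma fejer_kernel_mult_cos:
  assumes "m < N"
  shows "fejer_kernel m x * cos (real N * x - b) = (real m + 1) * cos (real N * x - b) +
     (\<Sum>j=1..m. (real m + 1 - real j) * (cos (real (N + j) * x - b) + cos (real (N - j) * x - b)))"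
proof -
  have t: "2 * cos (real j * x) * cos (real N * x - b) = cos (real (N + j) * x - b) + cos (real (N - j) * x - b)"
    if "j \<in> {1..m}" for j
  proof -
    have "j \<le> N" using that assms by auto
    then have e: "real (N - j) * x - b = (real N * x - b) - real j * x" "real (N + j) * x - b = (real N * x - b) + real j * x"
      by (auto simp: of_nat_diff algebra_simps)
    show ?thesis unfolding e cos_add cos_diff by (simp add: algebra_simps)
  qed
  have "fejer_kernel m x * cos (real N * x - b) = (real m + 1) * cos (real N * x - b) +
     (\<Sum>j=1..m. (real m + 1 - real j) * (2 * cos (real j * x) * cos (real N * x - b)))"
    unfolding fejer_kernel_def by (simp add: algebra_simps sum_distrib_left sum_distrib_right)
  also have "\<dots> = (real m + 1) * cos (real N * x - b) +
     (\<Sum>j=1..m. (real m + 1 - real j) * (cos (real (N + j) * x - b) + cos (real (N - j) * x - b)))"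
    using t by (intro arg_cong2[where f="(+)"] refl sum.cong) auto
  finally show ?thesis .
qed

lemma fejer_weight_eq:
  assumes "m < N"
  shows "(real m + 1) * (if k = N then 1 else 0) +
     (\<Sum>j=1..m. (real m + 1 - real j) * ((if k = N + j then 1 else 0) + (if k = N - j then 1 else 0))) = fejer_weight N m k"
proof -
  have split: "(\<Sum>j=1..m. (real m + 1 - real j) * ((if k = N + j then 1 else 0) + (if k = N - j then 1 else 0))) =
     (\<Sum>j=1..m. (if k = N + j then real m + 1 - real j else 0)) + (\<Sum>j=1..m. (if k = N - j then real m + 1 - real j else 0))"
    unfolding sum.distrib[symmetric] by (intro sum.cong refl) (simp add: algebra_simps)
  consider "k = N" | "k > N" | "k < N" by linarith
  then show ?thesis
  proof cases
    case 1
    have "(\<Sum>j=1..m. (if k = N + j then real m + 1 - real j else 0)) = 0" using 1 by (intro sum.neutral) auto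
    moreover have "(\<Sum>j=1..m. (if k = N - j then real m + 1 - real j else 0)) = 0" using 1 assms by (intro sum.neutral) auto
    ultimately show ?thesis unfolding split using 1 by (simp add: fejer_weight_def)
  next
    case 2
    have "(\<Sum>j=1..m. (if k = N - j then real m + 1 - real j else 0)) = 0" using 2 assms by (intro sum.neutral) auto
    moreover have "(\<Sum>j=1..m. (if k = N + j then real m + 1 - real j else 0)) =
        (\<Sum>j=1..m. (if j = k - N then real m + 1 - real j else 0))"
      using 2 by (intro sum.cong) auto
    moreover have "\<dots> = (if k - N \<in> {1..m} then real m + 1 - real (k - N) else 0)"
      by (simp add: sum.delta')
    moreover have "\<dots> = fejer_weight N m k" using 2 by (auto simp: fejer_weight_def of_nat_diff)
    ultimately show ?thesis unfolding split using 2 by simp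
  next
    case 3
    have "(\<Sum>j=1..m. (if k = N + j then real m + 1 - real j else 0)) = 0" using 3 by (intro sum.neutral) auto
    moreover have "(\<Sum>j=1..m. (if k = N - j then real m + 1 - real j else 0)) =
        (\<Sum>j=1..m. (if j = N - k then real m + 1 - real j else 0))"
      using 3 assms by (intro sum.cong) auto
    moreover have "\<dots> = (if N - k \<in> {1..m} then real m + 1 - real (N - k) else 0)"
      by (simp add: sum.delta')
    moreover have "\<dots> = fejer_weight N m k" using 3 by (auto simp: fejer_weight_def of_nat_diff)
    ultimately show ?thesis unfolding split using 3 by simp
  qed
qed

lemma has_integral_cos_mult_fejer_cos:
  assumes "m < N"
  shows "((\<lambda>x. cos (real k * x - a) * (fejer_kernel m x * cos (real N * x - b))) has_integral
           (pi * fejer_weight N m k * cos (a - b))) {-pi..pi}"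
proof -
  let ?c = "pi * cos (a - b)"
  have I: "((\<lambda>x. cos (real k * x - a) * cos (real L * x - b)) has_integral ?c * (if k = L then 1 else 0)) {-pi..pi}"
    if "L \<ge> 1" for L
  proof -
    have e: "?c * (if k = L then 1 else 0) = (if k = L then pi * cos (a - b) else 0)" by simp
    show ?thesis by (subst e) (rule cos_orthogonality[OF that])
  qed
  have N1: "N \<ge> 1" "\<And>j. j \<in> {1..m} \<Longrightarrow> N - j \<ge> 1" "\<And>j. N + j \<ge> 1" using assms by auto
  have "((\<lambda>x. (real m + 1) * (cos (real k * x - a) * cos (real N * x - b)) +
     (\<Sum>j=1..m. (real m + 1 - real j) * (cos (real k * x - a) * cos (real (N + j) * x - b) +
          cos (real k * x - a) * cos (real (N - j) * x - b)))) has_integral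
     (real m + 1) * (?c * (if k = N then 1 else 0)) +
     (\<Sum>j=1..m. (real m + 1 - real j) * (?c * (if k = N + j then 1 else 0) + ?c * (if k = N - j then 1 else 0))))
     {-pi..pi}"
    by (intro has_integral_add has_integral_mult_right has_integral_sum finite_atLeastAtMost I N1) auto
  moreover have "(real m + 1) * (?c * (if k = N then 1 else 0)) +
     (\<Sum>j=1..m. (real m + 1 - real j) * (?c * (if k = N + j then 1 else 0) + ?c * (if k = N - j then 1 else 0)))
     = ?c * ((real m + 1) * (if k = N then 1 else 0) +
     (\<Sum>j=1..m. (real m + 1 - real j) * ((if k = N + j then 1 else 0) + (if k = N - j then 1 else 0))))"
    by (simp add: algebra_simps sum_distrib_left)
  moreover have "\<And>x. cos (real k * x - a) * (fejer_kernel m x * cos (real N * x - b)) =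
      (real m + 1) * (cos (real k * x - a) * cos (real N * x - b)) +
     (\<Sum>j=1..m. (real m + 1 - real j) * (cos (real k * x - a) * cos (real (N + j) * x - b) +
          cos (real k * x - a) * cos (real (N - j) * x - b)))"
    unfolding fejer_kernel_mult_cos[OF assms] by (simp add: algebra_simps sum_distrib_left)
  ultimately show ?thesis unfolding fejer_weight_eq[OF assms] by (simp add: algebra_simps)
qed

lemma sum_squares_ge: "(\<Sum>i<r. (real i + 1)^2) \<ge> real r ^ 3 / 3"
proof (induction r)
  case (Suc r)
  have "real (Suc r) ^ 3 / 3 = real r ^ 3 / 3 + (real r ^ 2 + real r + 1 / 3)"
    by (simp add: power3_eq_cube power2_eq_square algebra_simps)
  also have "\<dots> \<le> (\<Sum>i<r. (real i + 1)^2) + (real r + 1)^2"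
    using Suc by (simp add: power2_eq_square algebra_simps)
  finally show ?case by simp
qed simp

lemma sum_fejer_weight_squares_ge:
  assumes mN: "m < N"
  shows "(\<Sum>k<N + m. (fejer_weight N m (Suc k))^2) \<ge> (real m + 1) ^ 3 / 3"
proof -
  let ?g = "\<lambda>k. (fejer_weight N m (Suc k))^2"
  let ?r = "\<lambda>i. N + m - 1 - i"
  have inj: "inj_on ?r {..<Suc m}" using mN by (auto simp: inj_on_def)
  have sub: "?r ` {..<Suc m} \<subseteq> {..<N + m}" using mN by auto
  have w: "fejer_weight N m (Suc (?r i)) = real i + 1" if "i < Suc m" for i
  proof -
    have "Suc (?r i) = N + (m - i)" using that mN by auto
    then show ?thesis using that by (simp add: fejer_weight_def of_nat_diff)
  qed
  have "(real m + 1) ^ 3 / 3 \<le> (\<Sum>i<Suc m. (real i + 1)^2)" using sum_squares_ge[of "Suc m"] by (simp add: add.commute)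
  also have "\<dots> = (\<Sum>i<Suc m. ?g (?r i))" using w by simp
  also have "\<dots> = (\<Sum>k\<in>?r ` {..<Suc m}. ?g k)" by (subst sum.reindex[OF inj]) (rule sum.cong, auto)
  also have "\<dots> \<le> (\<Sum>k<N + m. ?g k)" by (rule sum_mono2[OF _ sub]) auto
  finally show ?thesis .
qed

section \<open>Convolution with the kernel\<close>

lemma continuous_mult_absolutely_integrable:
  fixes g \<phi> :: "real \<Rightarrow> real"
  assumes g: "continuous_on {a..b} g" and \<phi>: "\<phi> absolutely_integrable_on {a..b}"
  shows "(\<lambda>t. g t * \<phi> t) absolutely_integrable_on {a..b}"
proof (rule absolutely_integrable_bounded_measurable_product_real[OF _ _ _ \<phi>])
  show "g \<in> borel_measurable (lebesgue_on {a..b})"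
    using g by (intro continuous_imp_measurable_on_sets_lebesgue) auto
  show "{a..b} \<in> sets lebesgue" by simp
  show "bounded (g ` {a..b})"
    using g by (intro compact_imp_bounded compact_continuous_image) auto
qed

lemma sums_integral_weighted_series:
  fixes u :: "nat \<Rightarrow> real" and b :: "nat \<Rightarrow> real \<Rightarrow> real" and h :: "real \<Rightarrow> real"
  assumes u0: "\<And>k. u k \<ge> 0" and su: "summable u"
    and bi: "\<And>k. b k integrable_on S" and hi: "h integrable_on S"
    and bh: "\<And>k t. t \<in> S \<Longrightarrow> \<bar>b k t\<bar> \<le> h t"
  shows "(\<lambda>k. u k * integral S (b k)) sums integral S (\<lambda>t. \<Sum>k. u k * b k t)"
    and "(\<lambda>t. \<Sum>k. u k * b k t) integrable_on S"
proof -
  let ?f = "\<lambda>j t. \<Sum>k<j. u k * b k t"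
  let ?g = "\<lambda>t. \<Sum>k. u k * b k t"
  have fint: "?f j integrable_on S" for j
    by (intro integrable_sum integrable_on_mult_right bi) auto
  have hint: "(\<lambda>t. suminf u * h t) integrable_on S"
    using hi by (rule integrable_on_mult_right)
  have le: "norm (?f j t) \<le> suminf u * h t" if "t \<in> S" for j t
  proof -
    have "\<bar>?f j t\<bar> \<le> (\<Sum>k<j. u k * h t)"
      by (rule order_trans[OF sum_abs]) (auto intro!: sum_mono simp: abs_mult u0 bh[OF that] intro: mult_left_mono)
    also have "\<dots> \<le> suminf u * h t"
    proof -
      have "h t \<ge> 0" using bh[OF that, of 0] by linarith
      then show ?thesis unfolding sum_distrib_right[symmetric] using su u0
        by (intro mult_right_mono sum_le_suminf) auto
    qed
    finally show ?thesis by simp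
  qed
  have conv: "(\<lambda>j. ?f j t) \<longlonglongrightarrow> ?g t" if "t \<in> S" for t
  proof (intro summable_LIMSEQ)
    show "summable (\<lambda>k. u k * b k t)"
      by (rule summable_comparison_test'[OF summable_mult2[OF su, of "h t"]])
         (auto simp: abs_mult u0 bh[OF that] intro: mult_left_mono)
  qed
  note dc = dominated_convergence[OF fint hint le conv]
  show "?g integrable_on S" using dc(1) .
  have "integral S (?f j) = (\<Sum>k<j. u k * integral S (b k))" for j
    by (subst Henstock_Kurzweil_Integration.integral_sum) (auto intro: bi integrable_on_mult_right)
  then show "(\<lambda>k. u k * integral S (b k)) sums integral S ?g"
    unfolding sums_def using dc(2) by simp
qed

text \<open>As in \<open>Psi_kernel\<close>, frequencies are indexed from \<open>0\<close>: the \<open>k\<close>-th term has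
  frequency \<open>k + 1\<close>.\<close>
definition cos_conv :: "real \<Rightarrow> (real \<Rightarrow> real) \<Rightarrow> nat \<Rightarrow> real \<Rightarrow> real" where
  "cos_conv c \<phi> k x = integral {-pi..pi} (\<lambda>t. cos (real (Suc k) * (x - t) - c) * \<phi> t)"

definition cos_moment :: "(real \<Rightarrow> real) \<Rightarrow> nat \<Rightarrow> real" where
  "cos_moment \<phi> k = integral {-pi..pi} (\<lambda>t. cos (real (Suc k) * t) * \<phi> t)"

definition sin_moment :: "(real \<Rightarrow> real) \<Rightarrow> nat \<Rightarrow> real" where
  "sin_moment \<phi> k = integral {-pi..pi} (\<lambda>t. sin (real (Suc k) * t) * \<phi> t)"

lemma cos_sin_mult_integrable:
  assumes \<phi>: "\<phi> absolutely_integrable_on {-pi..pi}"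
  shows "(\<lambda>t. cos (a * t + e) * \<phi> t) integrable_on {-pi..pi}" "(\<lambda>t. sin (a * t + e) * \<phi> t) integrable_on {-pi..pi}"
  by (intro absolutely_integrable_on_def[THEN iffD1, THEN conjunct1] continuous_mult_absolutely_integrable \<phi>;
      auto intro!: continuous_intros)+

lemma cos_conv_eq:
  assumes \<phi>: "\<phi> absolutely_integrable_on {-pi..pi}"
  shows "cos_conv c \<phi> k x = cos (real (Suc k) * x - c) * cos_moment \<phi> k + sin (real (Suc k) * x - c) * sin_moment \<phi> k"
proof -
  let ?K = "real (Suc k)"
  have e: "cos (?K * (x - t) - c) * \<phi> t =
      cos (?K * x - c) * (cos (?K * t) * \<phi> t) + sin (?K * x - c) * (sin (?K * t) * \<phi> t)" for t
  proof -
    have h: "?K * (x - t) - c = (?K * x - c) - ?K * t" by (simp add: algebra_simps)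
    have "cos (?K * (x - t) - c) = cos (?K * x - c) * cos (?K * t) + sin (?K * x - c) * sin (?K * t)"
      unfolding h by (rule cos_diff)
    then show ?thesis by (simp add: algebra_simps)
  qed
  have i1: "(\<lambda>t. cos (?K * t) * \<phi> t) integrable_on {-pi..pi}" using cos_sin_mult_integrable(1)[OF \<phi>, of ?K 0] by simp
  have i2: "(\<lambda>t. sin (?K * t) * \<phi> t) integrable_on {-pi..pi}" using cos_sin_mult_integrable(2)[OF \<phi>, of ?K 0] by simp
  show ?thesis unfolding cos_conv_def cos_moment_def sin_moment_def e
    using i1 i2 by (simp add: integral_add integrable_on_mult_right)
qed

lemma abs_integral_mult_le:
  fixes \<phi> g :: "real \<Rightarrow> real"
  assumes \<phi>: "\<phi> absolutely_integrable_on {-pi..pi}" and g: "\<And>t. \<bar>g t\<bar> \<le> 1"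
    and gi: "(\<lambda>t. g t * \<phi> t) integrable_on {-pi..pi}"
  shows "\<bar>integral {-pi..pi} (\<lambda>t. g t * \<phi> t)\<bar> \<le> integral {-pi..pi} (\<lambda>t. \<bar>\<phi> t\<bar>)"
proof -
  have "norm (integral {-pi..pi} (\<lambda>t. g t * \<phi> t)) \<le> integral {-pi..pi} (\<lambda>t. \<bar>\<phi> t\<bar>)"
  proof (rule integral_norm_bound_integral[OF gi])
    show "(\<lambda>t. \<bar>\<phi> t\<bar>) integrable_on {-pi..pi}" using \<phi> by (simp add: absolutely_integrable_on_def)
    show "norm (g t * \<phi> t) \<le> \<bar>\<phi> t\<bar>" for t
      using g[of t] mult_right_mono[of "\<bar>g t\<bar>" 1 "\<bar>\<phi> t\<bar>"] by (simp add: abs_mult)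
  qed
  then show ?thesis by simp
qed

lemma cos_conv_integrand_integrable:
  assumes \<phi>: "\<phi> absolutely_integrable_on {-pi..pi}"
  shows "(\<lambda>t. cos (real (Suc k) * (x - t) - c) * \<phi> t) integrable_on {-pi..pi}"
  using cos_sin_mult_integrable(1)[OF \<phi>, of "- real (Suc k)" "real (Suc k) * x - c"] by (simp add: algebra_simps)

lemma abs_cos_conv_le:
  assumes \<phi>: "\<phi> absolutely_integrable_on {-pi..pi}"
  shows "\<bar>cos_conv c \<phi> k x\<bar> \<le> integral {-pi..pi} (\<lambda>t. \<bar>\<phi> t\<bar>)"
  unfolding cos_conv_def by (rule abs_integral_mult_le[OF \<phi> _ cos_conv_integrand_integrable[OF \<phi>]]) simp

lemma Psi_kernel_conv_sums:
  fixes \<psi> :: "real \<Rightarrow> real"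
  assumes u0: "\<And>k. \<psi> (real (Suc k)) \<ge> 0" and su: "summable (\<lambda>k. \<psi> (real (Suc k)))"
    and \<phi>: "\<phi> absolutely_integrable_on {-pi..pi}"
  shows "(\<lambda>k. \<psi> (real (Suc k)) * cos_conv (\<beta> * pi / 2) \<phi> k x) sums
           integral {-pi..pi} (\<lambda>t. Psi_kernel \<psi> \<beta> (x - t) * \<phi> t)"
proof -
  let ?b = "\<lambda>k t. cos (real (Suc k) * (x - t) - \<beta> * pi / 2) * \<phi> t"
  have kernel_eq: "Psi_kernel \<psi> \<beta> (x - t) * \<phi> t = (\<Sum>k. \<psi> (real (Suc k)) * ?b k t)" for t
  proof -
    have "summable (\<lambda>k. \<psi> (real (Suc k)) * cos (real (Suc k) * (x - t) - \<beta> * pi / 2))"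
      by (rule summable_comparison_test'[OF su]) (simp add: abs_mult u0 mult_left_le del: of_nat_Suc)
    from suminf_mult2[OF this, of "\<phi> t"] show ?thesis
      unfolding Psi_kernel_def by (simp add: mult.assoc)
  qed
  have hi: "(\<lambda>t. \<bar>\<phi> t\<bar>) integrable_on {-pi..pi}"
    using \<phi> by (simp add: absolutely_integrable_on_def)
  have bh: "\<bar>?b k t\<bar> \<le> \<bar>\<phi> t\<bar>" if "t \<in> {-pi..pi}" for k t
    by (simp add: abs_mult mult_left_le_one_le)
  show ?thesis
    using sums_integral_weighted_series(1)[where b = ?b, OF u0 su cos_conv_integrand_integrable[OF \<phi>] hi bh]
    unfolding cos_conv_def kernel_eq .
qed

lemma C_class_conv_series:
  fixes \<psi> :: "real \<Rightarrow> real"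
  assumes u0: "\<And>k. \<psi> (real (Suc k)) \<ge> 0" and su: "summable (\<lambda>k. \<psi> (real (Suc k)))"
    and f: "f \<in> C_class \<psi> \<beta>"
  obtains a0 \<phi> where "\<phi> absolutely_integrable_on {-pi..pi}" "integral {-pi..pi} (\<lambda>t. \<bar>\<phi> t\<bar>) \<le> 1"
    "\<And>x. f x = a0 / 2 + (1 / pi) * (\<Sum>k. \<psi> (real (Suc k)) * cos_conv (\<beta> * pi / 2) \<phi> k x)"
proof -
  obtain a0 \<phi> where \<phi>: "\<phi> absolutely_integrable_on {-pi..pi}" and I1: "integral {-pi..pi} (\<lambda>t. \<bar>\<phi> t\<bar>) \<le> 1"
    and fe: "\<And>x. f x = a0 / 2 + (1 / pi) * integral {-pi..pi} (\<lambda>t. Psi_kernel \<psi> \<beta> (x - t) * \<phi> t)"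
    using f unfolding C_class_def by blast
  show ?thesis
  proof (rule that[OF \<phi> I1])
    fix x show "f x = a0 / 2 + (1 / pi) * (\<Sum>k. \<psi> (real (Suc k)) * cos_conv (\<beta> * pi / 2) \<phi> k x)"
      unfolding fe sums_unique[OF Psi_kernel_conv_sums[OF u0 su \<phi>]] ..
  qed
qed

lemma has_integral_cos_conv_mult_cos:
  assumes \<phi>: "\<phi> absolutely_integrable_on {-pi..pi}"
  shows "((\<lambda>t. cos_conv c \<phi> k t * cos (real j * t - d)) has_integral
     (if j = Suc k then pi * (cos_moment \<phi> k * cos (d - c) + sin_moment \<phi> k * cos (d - (c + pi / 2))) else 0)) {-pi..pi}"
proof -
  let ?K = "real (Suc k)"
  have e: "cos_conv c \<phi> k t * cos (real j * t - d) = cos_moment \<phi> k * (cos (real j * t - d) * cos (?K * t - c)) +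
        sin_moment \<phi> k * (cos (real j * t - d) * cos (?K * t - (c + pi / 2)))" for t
  proof -
    have "sin (?K * t - c) = cos (?K * t - (c + pi / 2))" unfolding sin_eq_cos_minus_pi_half by (simp add: algebra_simps)
    then show ?thesis unfolding cos_conv_eq[OF \<phi>] by (simp add: algebra_simps)
  qed
  have "((\<lambda>t. cos_moment \<phi> k * (cos (real j * t - d) * cos (?K * t - c)) +
        sin_moment \<phi> k * (cos (real j * t - d) * cos (?K * t - (c + pi / 2)))) has_integral
      cos_moment \<phi> k * (if j = Suc k then pi * cos (d - c) else 0) + sin_moment \<phi> k * (if j = Suc k then pi * cos (d - (c + pi / 2)) else 0)) {-pi..pi}"
    by (intro has_integral_add has_integral_mult_right cos_orthogonality) auto
  then show ?thesis unfolding e by (rule has_integral_eq_rhs) (simp add: algebra_simps)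
qed

lemma has_integral_cos_conv_series_mult_cos:
  fixes u :: "nat \<Rightarrow> real" and \<phi> :: "real \<Rightarrow> real"
  assumes u0: "\<And>k. u k \<ge> 0" and su: "summable u"
    and \<phi>: "\<phi> absolutely_integrable_on {-pi..pi}" and I1: "integral {-pi..pi} (\<lambda>t. \<bar>\<phi> t\<bar>) \<le> 1"
  shows "((\<lambda>t. (\<Sum>k. u k * cos_conv c \<phi> k t) * cos (real j * t - d)) has_integral
     (if j = 0 then 0 else pi * (u (j - 1) * (cos_moment \<phi> (j - 1) * cos (d - c) + sin_moment \<phi> (j - 1) * cos (d - (c + pi / 2))))))
     {-pi..pi}"
proof -
  let ?b = "\<lambda>k t. cos_conv c \<phi> k t * cos (real j * t - d)"
  let ?v = "\<lambda>k. (if j = Suc k then pi * (cos_moment \<phi> k * cos (d - c) + sin_moment \<phi> k * cos (d - (c + pi / 2))) else 0)"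
  have conv_le: "\<bar>cos_conv c \<phi> k t\<bar> \<le> 1" for k t
    using abs_cos_conv_le[OF \<phi>] I1 order_trans by blast
  have bb: "\<bar>?b k t\<bar> \<le> 1" for k t
    using conv_le[of k t] abs_cos_le_one[of "real j * t - d"] by (simp add: abs_mult mult_le_one)
  have bi: "?b k integrable_on {-pi..pi}" for k
    using has_integral_cos_conv_mult_cos[OF \<phi>] by blast
  note si = sums_integral_weighted_series[where b = ?b and h = "\<lambda>_. 1", OF u0 su bi integrable_const_ivl bb]
  have ib: "integral {-pi..pi} (?b k) = ?v k" for k
    using has_integral_cos_conv_mult_cos[OF \<phi>] by blast
  have sum_v: "(\<lambda>k. u k * ?v k) sums (if j = 0 then 0 else pi * (u (j - 1) * (cos_moment \<phi> (j - 1) * cos (d - c) + sin_moment \<phi> (j - 1) * cos (d - (c + pi / 2)))))"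
  proof (cases j)
    case 0
    then show ?thesis by simp
  next
    case (Suc i)
    have "(\<lambda>k. u k * ?v k) = (\<lambda>k. if k = i then pi * (u k * (cos_moment \<phi> k * cos (d - c) + sin_moment \<phi> k * cos (d - (c + pi / 2)))) else 0)"
      using Suc by (auto simp: fun_eq_iff)
    then show ?thesis using Suc sums_single[of i "\<lambda>k. pi * (u k * (cos_moment \<phi> k * cos (d - c) + sin_moment \<phi> k * cos (d - (c + pi / 2))))"] by simp
  qed
  have prod: "(\<Sum>k. u k * cos_conv c \<phi> k t) * cos (real j * t - d) = (\<Sum>k. u k * ?b k t)" for t
  proof -
    have "summable (\<lambda>k. u k * cos_conv c \<phi> k t)"
      by (rule summable_comparison_test'[OF su]) (auto simp: abs_mult u0 intro: mult_left_le conv_le)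
    from suminf_mult2[OF this, of "cos (real j * t - d)"] show ?thesis
      by (simp add: mult.assoc)
  qed
  have "((\<lambda>t. \<Sum>k. u k * ?b k t) has_integral integral {-pi..pi} (\<lambda>t. \<Sum>k. u k * ?b k t)) {-pi..pi}"
    using si(2) unfolding has_integral_integral .
  then show ?thesis
    unfolding prod sums_unique2[OF si(1)[unfolded ib] sum_v] .
qed

lemma has_integral_conv_series_mult_cos:
  fixes u :: "nat \<Rightarrow> real" and \<phi> f :: "real \<Rightarrow> real"
  assumes u0: "\<And>k. u k \<ge> 0" and su: "summable u"
    and \<phi>: "\<phi> absolutely_integrable_on {-pi..pi}" and I1: "integral {-pi..pi} (\<lambda>t. \<bar>\<phi> t\<bar>) \<le> 1"
    and feq: "\<And>x. f x = a0 / 2 + (1 / pi) * (\<Sum>k. u k * cos_conv c \<phi> k x)"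
  shows "((\<lambda>t. f t * cos (real j * t - d)) has_integral
     (a0 / 2 * (if j = 0 then 2 * pi * cos d else 0) +
      (if j = 0 then 0 else u (j - 1) * (cos_moment \<phi> (j - 1) * cos (d - c) + sin_moment \<phi> (j - 1) * cos (d - (c + pi / 2))))))
     {-pi..pi}"
proof -
  have fe: "f t * cos (real j * t - d) =
      a0 / 2 * cos (real j * t - d) + (1 / pi) * ((\<Sum>k. u k * cos_conv c \<phi> k t) * cos (real j * t - d))" for t
    by (simp only: feq) (simp add: algebra_simps)
  have i1: "((\<lambda>t. a0 / 2 * cos (real j * t - d)) has_integral a0 / 2 * (if j = 0 then 2 * pi * cos d else 0)) {-pi..pi}"
    using has_integral_mult_right[OF has_integral_cos_int_mult[of "int j" d], of "a0/2"] by simp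
  note i2 = has_integral_mult_right[OF has_integral_cos_conv_series_mult_cos[OF u0 su \<phi> I1, of c j d], of "1 / pi"]
  show ?thesis unfolding fe by (rule has_integral_eq_rhs[OF has_integral_add[OF i1 i2]]) simp
qed

lemma sum_atLeast1_shift: "(\<Sum>j=1..n. g (j - 1)) = (\<Sum>k<n. (g k :: real))" for g :: "nat \<Rightarrow> real"
  by (induction n) (auto simp: sum.cl_ivl_Suc)

lemma fourier_partial_sum_conv_series:
  fixes u :: "nat \<Rightarrow> real" and \<phi> f :: "real \<Rightarrow> real"
  assumes u0: "\<And>k. u k \<ge> 0" and su: "summable u"
    and \<phi>: "\<phi> absolutely_integrable_on {-pi..pi}" and I1: "integral {-pi..pi} (\<lambda>t. \<bar>\<phi> t\<bar>) \<le> 1"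
    and feq: "\<And>x. f x = a0 / 2 + (1 / pi) * (\<Sum>k. u k * cos_conv c \<phi> k x)"
  shows "fourier_partial_sum f i x = a0 / 2 + (1 / pi) * (\<Sum>k<i. u k * cos_conv c \<phi> k x)"
proof -
  note FI = has_integral_conv_series_mult_cos[OF u0 su \<phi> I1 feq]
  have fc0: "fourier_cos f 0 = a0"
    using integral_unique[OF FI[of 0 0]] by (simp add: fourier_cos_def)
  have fcj: "fourier_cos f j = (1 / pi) * (u (j - 1) * (cos_moment \<phi> (j - 1) * cos c - sin_moment \<phi> (j - 1) * sin c))" if "j \<ge> 1" for j
  proof -
    have e1: "cos (0 - c) = cos c" "cos (0 - (c + pi / 2)) = - sin c" by (simp_all add: cos_add cos_diff)
    have "integral {-pi..pi} (\<lambda>t. f t * cos (real j * t)) = u (j - 1) * (cos_moment \<phi> (j - 1) * cos c - sin_moment \<phi> (j - 1) * sin c)"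
      using integral_unique[OF FI[of j 0]] that unfolding e1 diff_zero by simp
    then show ?thesis unfolding fourier_cos_def by simp
  qed
  have fsj: "fourier_sin f j = (1 / pi) * (u (j - 1) * (cos_moment \<phi> (j - 1) * sin c + sin_moment \<phi> (j - 1) * cos c))" if "j \<ge> 1" for j
  proof -
    have e: "sin (real j * t) = cos (real j * t - pi / 2)" for t by (simp add: sin_eq_cos_minus_pi_half)
    have "cos (pi / 2 - c) = sin c" "cos (pi / 2 - (c + pi / 2)) = cos c" by (simp_all add: cos_diff)
    then have "integral {-pi..pi} (\<lambda>t. f t * sin (real j * t)) = u (j - 1) * (cos_moment \<phi> (j - 1) * sin c + sin_moment \<phi> (j - 1) * cos c)"
      using integral_unique[OF FI[of j "pi/2"]] that unfolding e by simp
    then show ?thesis unfolding fourier_sin_def by simp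
  qed
  have trm: "fourier_cos f j * cos (real j * x) + fourier_sin f j * sin (real j * x) =
       (1 / pi) * (u (j - 1) * cos_conv c \<phi> (j - 1) x)" if "j \<in> {1..i}" for j
  proof -
    have j: "j \<ge> 1" "real (Suc (j - 1)) = real j" using that by auto
    have cs: "cos (real j * x - c) = cos (real j * x) * cos c + sin (real j * x) * sin c"
      "sin (real j * x - c) = sin (real j * x) * cos c - cos (real j * x) * sin c"
      by (rule cos_diff, rule sin_diff)
    show ?thesis unfolding fcj[OF j(1)] fsj[OF j(1)] cos_conv_eq[OF \<phi>] j(2) cs
      by (simp add: algebra_simps)
  qed
  have "fourier_partial_sum f i x = a0 / 2 + (\<Sum>j=1..i. (1 / pi) * (u (j - 1) * cos_conv c \<phi> (j - 1) x))"
    unfolding fourier_partial_sum_def fc0 using trm by (intro arg_cong2[where f = "(+)"] refl sum.cong) auto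
  also have "\<dots> = a0 / 2 + (1 / pi) * (\<Sum>k<i. u k * cos_conv c \<phi> k x)"
    using sum_atLeast1_shift[of "\<lambda>k. (1 / pi) * (u k * cos_conv c \<phi> k x)" i] by (simp add: sum_distrib_left)
  finally show ?thesis .
qed

lemma abs_conv_series_minus_partial_sum_le:
  fixes u :: "nat \<Rightarrow> real" and \<phi> f :: "real \<Rightarrow> real"
  assumes u0: "\<And>k. u k \<ge> 0" and su: "summable u"
    and \<phi>: "\<phi> absolutely_integrable_on {-pi..pi}" and I1: "integral {-pi..pi} (\<lambda>t. \<bar>\<phi> t\<bar>) \<le> 1"
    and feq: "\<And>x. f x = a0 / 2 + (1 / pi) * (\<Sum>k. u k * cos_conv c \<phi> k x)"
  shows "\<bar>f x - fourier_partial_sum f i x\<bar> \<le> (\<Sum>k. u (k + i))"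
proof -
  have conv_le: "\<bar>cos_conv c \<phi> k t\<bar> \<le> 1" for k t using abs_cos_conv_le[OF \<phi>] I1 order_trans by blast
  have sJ: "summable (\<lambda>k. u k * cos_conv c \<phi> k x)"
    by (rule summable_comparison_test'[OF su]) (auto simp: abs_mult u0 intro: mult_left_le conv_le)
  have "f x - fourier_partial_sum f i x = (1 / pi) * (\<Sum>k. u (k + i) * cos_conv c \<phi> (k + i) x)"
    unfolding fourier_partial_sum_conv_series[OF u0 su \<phi> I1 feq] feq suminf_minus_initial_segment[OF sJ]
    by (simp add: algebra_simps)
  also have "\<bar>\<dots>\<bar> \<le> 1 * (\<Sum>k. u (k + i))"
  proof -
    have s1: "summable (\<lambda>k. u (k + i))" using su by (rule summable_ignore_initial_segment)
    have s2: "summable (\<lambda>k. \<bar>u (k + i) * cos_conv c \<phi> (k + i) x\<bar>)"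
      by (rule summable_comparison_test'[OF s1]) (auto simp: abs_mult u0 intro: mult_left_le conv_le)
    have "\<bar>\<Sum>k. u (k + i) * cos_conv c \<phi> (k + i) x\<bar> \<le> (\<Sum>k. \<bar>u (k + i) * cos_conv c \<phi> (k + i) x\<bar>)"
      by (rule summable_rabs[OF s2])
    also have "\<dots> \<le> (\<Sum>k. u (k + i))"
      by (rule suminf_le[OF _ s2 s1]) (auto simp: abs_mult u0 intro: mult_left_le conv_le)
    finally have "\<bar>\<Sum>k. u (k + i) * cos_conv c \<phi> (k + i) x\<bar> \<le> (\<Sum>k. u (k + i))" .
    moreover have "1 / pi \<le> 1" using pi_gt3 by simp
    moreover have "0 \<le> (\<Sum>k. u (k + i))" using s1 u0 by (intro suminf_nonneg) auto
    ultimately have "1 / pi * \<bar>\<Sum>k. u (k + i) * cos_conv c \<phi> (k + i) x\<bar> \<le> 1 * (\<Sum>k. u (k + i))"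
      by (intro mult_mono) auto
    then show ?thesis by (simp add: abs_mult)
  qed
  finally show ?thesis by simp
qed

section \<open>The upper estimate\<close>

lemma sup_norm_ge:
  assumes "\<And>M. (\<forall>x. \<bar>g x\<bar> \<le> M) \<Longrightarrow> L \<le> M"
  shows "ereal L \<le> sup_norm g"
proof (rule ccontr)
  assume "\<not> ereal L \<le> sup_norm g"
  then have lt: "sup_norm g < ereal L" by simp
  have ge: "ereal \<bar>g x\<bar> \<le> sup_norm g" for x unfolding sup_norm_def by (rule SUP_upper) simp
  obtain S where S: "sup_norm g = ereal S"
    using lt ge[of 0] by (cases "sup_norm g") auto
  have "\<forall>x. \<bar>g x\<bar> \<le> S" using ge unfolding S by simp
  then have "L \<le> S" using assms by blast
  then show False using lt S by simp
qed

lemma sup_norm_le: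
  assumes "\<And>x. \<bar>g x\<bar> \<le> B"
  shows "sup_norm g \<le> ereal B"
  unfolding sup_norm_def by (rule SUP_least) (simp add: assms)

lemma fourier_partial_sum_in_trig_polys: "fourier_partial_sum f m \<in> trig_polys m"
  unfolding trig_polys_def fourier_partial_sum_def
  by (rule CollectI, rule exI[of _ "\<lambda>k. if k = 0 then fourier_cos f 0 / 2 else fourier_cos f k"],
      rule exI[of _ "fourier_sin f"]) auto

lemma best_approx_le_Fourier_error: "best_approx \<psi> \<beta> n \<le> Fourier_error \<psi> \<beta> n"
  unfolding best_approx_def Fourier_error_def
proof (rule SUP_mono)
  fix f assume "f \<in> C_class \<psi> \<beta>"
  then show "\<exists>g\<in>C_class \<psi> \<beta>. (INF p\<in>trig_polys (n - 1). sup_norm (\<lambda>x. f x - p x))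
            \<le> sup_norm (\<lambda>x. g x - fourier_partial_sum g (n - 1) x)"
    by (intro bexI[of _ f] INF_lower fourier_partial_sum_in_trig_polys)
qed

lemma powr_neg_le_diff:
  fixes y \<alpha> :: real assumes y: "y \<ge> 1" and a: "\<alpha> > 1"
  shows "(y + 1) powr (-\<alpha>) \<le> (y powr (1 - \<alpha>) - (y + 1) powr (1 - \<alpha>)) / (\<alpha> - 1)"
proof -
  have der: "DERIV (\<lambda>t. t powr (1 - \<alpha>)) t :> (1 - \<alpha>) * t powr (1 - \<alpha> - 1)" if "y \<le> t" for t
    using y that by (intro has_real_derivative_powr) auto
  obtain z where z: "y < z" "z < y + 1"
    and e: "(y + 1) powr (1 - \<alpha>) - y powr (1 - \<alpha>) = (y + 1 - y) * ((1 - \<alpha>) * z powr (1 - \<alpha> - 1))"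
    using MVT2[of y "y + 1" "\<lambda>t. t powr (1 - \<alpha>)" "\<lambda>t. (1 - \<alpha>) * t powr (1 - \<alpha> - 1)"] der by auto
  have "(y + 1) powr (-\<alpha>) \<le> z powr (-\<alpha>)"
    using z y a by (intro powr_mono2') auto
  then have "(\<alpha> - 1) * (y + 1) powr (-\<alpha>) \<le> (\<alpha> - 1) * z powr (-\<alpha>)" using a by simp
  also have "\<dots> = y powr (1 - \<alpha>) - (y + 1) powr (1 - \<alpha>)" using e by (simp add: algebra_simps)
  finally show ?thesis using a by (simp add: field_simps)
qed

lemma sum_powr_neg_le:
  fixes \<alpha> :: real assumes a: "\<alpha> > 1" and n: "n \<ge> 1"
  shows "(\<Sum>k<M. real (k + n + 1) powr (-\<alpha>)) \<le> (real n powr (1 - \<alpha>) - real (n + M) powr (1 - \<alpha>)) / (\<alpha> - 1)"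
proof (induction M)
  case 0
  then show ?case by simp
next
  case (Suc M)
  have "real (M + n + 1) powr (-\<alpha>) \<le> (real (n + M) powr (1 - \<alpha>) - real (n + Suc M) powr (1 - \<alpha>)) / (\<alpha> - 1)"
    using powr_neg_le_diff[of "real (n + M)" \<alpha>] a n by (simp add: add.commute add.left_commute)
  then show ?case using Suc by (simp add: diff_divide_distrib)
qed

lemma Theta1_partial_sum_le:
  fixes \<psi> :: "real \<Rightarrow> real"
  assumes pos: "\<And>t. t \<ge> 1 \<Longrightarrow> \<psi> t > 0"
    and a: "\<alpha> > 1" and K: "K > 0"
    and H: "\<And>t1 t2. t1 > t2 \<Longrightarrow> t2 \<ge> 1 \<Longrightarrow> t1 powr \<alpha> * \<psi> t1 \<le> K * (t2 powr \<alpha> * \<psi> t2)"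
    and n: "n \<ge> 1"
  shows "(\<Sum>k<M. \<psi> (real (k + n))) \<le> (1 + K / (\<alpha> - 1)) * real n * \<psi> (real n)"
proof -
  let ?C = "(1 + K / (\<alpha> - 1)) * real n * \<psi> (real n)"
  have nn: "\<psi> (real (k + n)) \<ge> 0" for k using pos[of "real (k + n)"] n by auto
  have t1: "\<psi> (real (k + n + 1)) \<le> K * real n powr \<alpha> * \<psi> (real n) * real (k + n + 1) powr (-\<alpha>)" for k
  proof -
    have "real (k + n + 1) powr \<alpha> * \<psi> (real (k + n + 1)) \<le> K * (real n powr \<alpha> * \<psi> (real n))"
      using H[of "real n" "real (k + n + 1)"] n by simp
    moreover have "real (k + n + 1) powr \<alpha> > 0" by simp
    ultimately show ?thesis by (simp add: powr_minus field_simps)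
  qed
  have "(\<Sum>k<M. \<psi> (real (k + n))) \<le> (\<Sum>k<Suc M. \<psi> (real (k + n)))"
    using nn[of M] by simp
  also have "\<dots> = \<psi> (real n) + (\<Sum>k<M. \<psi> (real (k + n + 1)))"
    by (subst sum.lessThan_Suc_shift) (simp add: add.commute add.left_commute)
  also have "(\<Sum>k<M. \<psi> (real (k + n + 1))) \<le> (\<Sum>k<M. K * real n powr \<alpha> * \<psi> (real n) * real (k + n + 1) powr (-\<alpha>))"
    by (intro sum_mono t1)
  also have "\<dots> = K * real n powr \<alpha> * \<psi> (real n) * (\<Sum>k<M. real (k + n + 1) powr (-\<alpha>))"
    by (simp add: sum_distrib_left)
  also have "\<dots> \<le> K * real n powr \<alpha> * \<psi> (real n) * (real n powr (1 - \<alpha>) / (\<alpha> - 1))"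
  proof (intro mult_left_mono)
    show "(\<Sum>k<M. real (k + n + 1) powr (-\<alpha>)) \<le> real n powr (1 - \<alpha>) / (\<alpha> - 1)"
      using sum_powr_neg_le[OF a n, of M] a by (smt (verit) divide_right_mono powr_ge_zero)
    show "0 \<le> K * real n powr \<alpha> * \<psi> (real n)" using K pos[of "real n"] n by simp
  qed
  also have "real n powr \<alpha> * real n powr (1 - \<alpha>) = real n"
    using n by (simp add: powr_add[symmetric])
  then have "K * real n powr \<alpha> * \<psi> (real n) * (real n powr (1 - \<alpha>) / (\<alpha> - 1)) = K / (\<alpha> - 1) * real n * \<psi> (real n)"
    by (simp add: field_simps)
  finally have "(\<Sum>k<M. \<psi> (real (k + n))) \<le> \<psi> (real n) + K / (\<alpha> - 1) * real n * \<psi> (real n)" by simp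
  also have "\<dots> \<le> ?C" using n pos[of "real n"] by (simp add: algebra_simps)
  finally show ?thesis .
qed

lemma Theta1_tail_bound:
  fixes \<psi> :: "real \<Rightarrow> real"
  assumes pos: "\<And>t. t \<ge> 1 \<Longrightarrow> \<psi> t > 0"
    and a: "\<alpha> > 1" and K: "K > 0"
    and H: "\<And>t1 t2. t1 > t2 \<Longrightarrow> t2 \<ge> 1 \<Longrightarrow> t1 powr \<alpha> * \<psi> t1 \<le> K * (t2 powr \<alpha> * \<psi> t2)"
    and n: "n \<ge> 1"
  shows "summable (\<lambda>k. \<psi> (real (k + n)))"
    and "(\<Sum>k. \<psi> (real (k + n))) \<le> (1 + K / (\<alpha> - 1)) * real n * \<psi> (real n)"
proof -
  note ps = Theta1_partial_sum_le[OF pos a K H n]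
  have nn: "\<psi> (real (k + n)) \<ge> 0" for k using pos[of "real (k + n)"] n by auto
  show sm: "summable (\<lambda>k. \<psi> (real (k + n)))"
  proof (rule bounded_imp_summable[OF nn])
    fix M show "(\<Sum>k\<le>M. \<psi> (real (k + n))) \<le> (1 + K / (\<alpha> - 1)) * real n * \<psi> (real n)"
      using ps[of "Suc M"] by (simp only: lessThan_Suc_atMost)
  qed
  show "(\<Sum>k. \<psi> (real (k + n))) \<le> (1 + K / (\<alpha> - 1)) * real n * \<psi> (real n)"
    by (rule suminf_le_const[OF sm ps])
qed

lemma Fourier_error_le:
  fixes \<psi> :: "real \<Rightarrow> real"
  assumes pos: "\<And>t. t \<ge> 1 \<Longrightarrow> \<psi> t > 0"
    and a: "\<alpha> > 1" and K: "K > 0"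
    and H: "\<And>t1 t2. t1 > t2 \<Longrightarrow> t2 \<ge> 1 \<Longrightarrow> t1 powr \<alpha> * \<psi> t1 \<le> K * (t2 powr \<alpha> * \<psi> t2)"
    and n: "n \<ge> 1"
  shows "Fourier_error \<psi> \<beta> n \<le> ereal ((1 + K / (\<alpha> - 1)) * \<psi> (real n) * real n)"
  unfolding Fourier_error_def
proof (rule SUP_least)
  fix f assume f: "f \<in> C_class \<psi> \<beta>"
  have u0: "\<psi> (real (Suc k)) \<ge> 0" for k
    using pos[of "real (Suc k)"] by simp
  have su: "summable (\<lambda>k. \<psi> (real (Suc k)))"
    using Theta1_tail_bound(1)[OF pos a K H, of 1] by simp
  obtain a0 \<phi> where \<phi>: "\<phi> absolutely_integrable_on {-pi..pi}" "integral {-pi..pi} (\<lambda>t. \<bar>\<phi> t\<bar>) \<le> 1"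
    and fe: "\<And>x. f x = a0 / 2 + (1 / pi) * (\<Sum>k. \<psi> (real (Suc k)) * cos_conv (\<beta> * pi / 2) \<phi> k x)"
    using C_class_conv_series[OF u0 su f] by blast
  show "sup_norm (\<lambda>x. f x - fourier_partial_sum f (n - 1) x) \<le> ereal ((1 + K / (\<alpha> - 1)) * \<psi> (real n) * real n)"
  proof (rule sup_norm_le)
    fix x
    have "\<bar>f x - fourier_partial_sum f (n - 1) x\<bar> \<le> (\<Sum>k. \<psi> (real (Suc (k + (n - 1)))))"
      by (rule abs_conv_series_minus_partial_sum_le[OF u0 su \<phi> fe])
    also have "(\<lambda>k. \<psi> (real (Suc (k + (n - 1))))) = (\<lambda>k. \<psi> (real (k + n)))"
      using n by (auto simp: fun_eq_iff)
    also have "(\<Sum>k. \<psi> (real (k + n))) \<le> (1 + K / (\<alpha> - 1)) * \<psi> (real n) * real n"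
      using Theta1_tail_bound(2)[OF pos a K H n] by (simp add: mult.assoc mult.commute mult.left_commute)
    finally show "\<bar>f x - fourier_partial_sum f (n - 1) x\<bar> \<le> (1 + K / (\<alpha> - 1)) * \<psi> (real n) * real n" .
  qed
qed

section \<open>The lower estimate\<close>

definition test_density :: "nat \<Rightarrow> nat \<Rightarrow> real \<Rightarrow> real" where
  "test_density N m t = fejer_kernel m t * cos (real N * t) / (2 * pi * (real m + 1))"

lemma continuous_on_test_density: "continuous_on S (test_density N m)"
  unfolding test_density_def[abs_def] by (auto intro!: continuous_intros continuous_on_fejer_kernel[THEN continuous_on_subset])

lemma test_density_absolutely_integrable: "test_density N m absolutely_integrable_on {-pi..pi}"
  by (rule absolutely_integrable_continuous_real[OF continuous_on_test_density])

lemma test_density_periodic: "test_density N m (t + 2 * pi) = test_density N m t"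
  unfolding test_density_def fejer_kernel_periodic cos_nat_mult_periodic ..

lemma integral_test_density:
  assumes "m + 1 < N"
  shows "integral {-pi..pi} (test_density N m) = 0"
proof -
  have w: "fejer_weight N m 0 = 0" using assms by (simp add: fejer_weight_def)
  have "((\<lambda>x. cos (real 0 * x - 0) * (fejer_kernel m x * cos (real N * x - 0))) has_integral 0) {-pi..pi}"
    using has_integral_cos_mult_fejer_cos[of m N 0 0 0] assms unfolding w by simp
  then have "((\<lambda>x. (fejer_kernel m x * cos (real N * x)) / (2 * pi * (real m + 1))) has_integral 0 / (2 * pi * (real m + 1))) {-pi..pi}"
    by (intro has_integral_divide) simp
  then show ?thesis unfolding test_density_def[abs_def] by (intro integral_unique) simp
qed

lemma integral_abs_test_density_le:
  shows "integral {-pi..pi} (\<lambda>t. \<bar>test_density N m t\<bar>) \<le> 1"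
proof -
  have i1: "(\<lambda>t. \<bar>test_density N m t\<bar>) integrable_on {-pi..pi}"
    using test_density_absolutely_integrable by (simp add: absolutely_integrable_on_def)
  have i2: "((\<lambda>t. fejer_kernel m t / (2 * pi * (real m + 1))) has_integral 2 * pi * (real m + 1) / (2 * pi * (real m + 1))) {-pi..pi}"
    by (intro has_integral_divide has_integral_fejer_kernel)
  have le: "\<bar>test_density N m t\<bar> \<le> fejer_kernel m t / (2 * pi * (real m + 1))" for t
  proof -
    have "\<bar>fejer_kernel m t * cos (real N * t)\<bar> \<le> fejer_kernel m t"
      using fejer_kernel_nonneg[of m t] abs_cos_le_one[of "real N * t"] by (simp add: abs_mult mult_left_le)
    then show ?thesis unfolding test_density_def by (simp add: divide_right_mono)
  qed
  have "integral {-pi..pi} (\<lambda>t. \<bar>test_density N m t\<bar>) \<le> 2 * pi * (real m + 1) / (2 * pi * (real m + 1))"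
    using has_integral_le[OF i1[unfolded has_integral_integral] i2] le by blast
  then show ?thesis by simp
qed

lemma cos_conv_test_density:
  assumes "m < N"
  shows "cos_conv c (test_density N m) k x = fejer_weight N m (Suc k) * cos (real (Suc k) * x - c) / (2 * (real m + 1))"
proof -
  let ?K = "real (Suc k)"
  have e: "cos (?K * (x - t) - c) * test_density N m t =
     (cos (?K * t - (?K * x - c)) * (fejer_kernel m t * cos (real N * t - 0))) / (2 * pi * (real m + 1))" for t
  proof -
    have "?K * (x - t) - c = - (?K * t - (?K * x - c))" by (simp add: algebra_simps)
    then have "cos (?K * (x - t) - c) = cos (?K * t - (?K * x - c))" by (metis cos_minus)
    then show ?thesis unfolding test_density_def by simp
  qed
  have "((\<lambda>t. cos (?K * (x - t) - c) * test_density N m t) has_integral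
        (pi * fejer_weight N m (Suc k) * cos ((?K * x - c) - 0)) / (2 * pi * (real m + 1))) {-pi..pi}"
    unfolding e by (intro has_integral_divide has_integral_cos_mult_fejer_cos assms)
  then show ?thesis unfolding cos_conv_def by (simp add: integral_unique)
qed

definition test_function :: "(real \<Rightarrow> real) \<Rightarrow> real \<Rightarrow> nat \<Rightarrow> nat \<Rightarrow> real \<Rightarrow> real" where
  "test_function \<psi> \<beta> N m x = (1 / pi) * integral {-pi..pi} (\<lambda>t. Psi_kernel \<psi> \<beta> (x - t) * test_density N m t)"

lemma test_function_in_C_class:
  assumes "m + 1 < N"
  shows "test_function \<psi> \<beta> N m \<in> C_class \<psi> \<beta>"
  unfolding C_class_def
  apply (rule CollectI)
  apply (rule exI[of _ 0], rule exI[of _ "test_density N m"])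
  using test_density_periodic test_density_absolutely_integrable integral_test_density[OF assms] integral_abs_test_density_le by (simp add: test_function_def)

lemma test_function_eq:
  fixes \<psi> :: "real \<Rightarrow> real"
  assumes u0: "\<And>k. \<psi> (real (Suc k)) \<ge> 0" and su: "summable (\<lambda>k. \<psi> (real (Suc k)))"
    and mN: "m < N"
  shows "test_function \<psi> \<beta> N m x = (\<Sum>k<N + m. (\<psi> (real (Suc k)) * fejer_weight N m (Suc k) / (2 * pi * (real m + 1))) *
            cos (real (Suc k) * x - \<beta> * pi / 2))"
proof -
  let ?t = "\<lambda>k. \<psi> (real (Suc k)) * cos_conv (\<beta> * pi / 2) (test_density N m) k x"
  have z: "?t k = 0" if "k \<notin> {..<N + m}" for k
  proof -
    have "fejer_weight N m (Suc k) = 0" using that by (simp add: fejer_weight_def)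
    then show ?thesis unfolding cos_conv_test_density[OF mN] by simp
  qed
  have "integral {-pi..pi} (\<lambda>t. Psi_kernel \<psi> \<beta> (x - t) * test_density N m t) = (\<Sum>k<N + m. ?t k)"
    using sums_unique2[OF Psi_kernel_conv_sums[OF u0 su test_density_absolutely_integrable] sums_finite[of "{..<N+m}" ?t]] z by simp
  then show ?thesis unfolding test_function_def cos_conv_test_density[OF mN]
    by (simp add: sum_distrib_left algebra_simps)
qed

lemma has_integral_trig_poly_mult_fejer_cos:
  assumes mN: "m < N" and p: "p \<in> trig_polys d"
    and wz: "\<And>j. j \<le> d \<Longrightarrow> fejer_weight N m j = 0"
  shows "((\<lambda>x. p x * (fejer_kernel m x * cos (real N * x - c))) has_integral 0) {-pi..pi}"
proof -
  let ?H = "\<lambda>x. fejer_kernel m x * cos (real N * x - c)"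
  obtain a b where pe: "\<And>x. p x = a 0 + (\<Sum>k=1..d. a k * cos (real k * x) + b k * sin (real k * x))"
    using p unfolding trig_polys_def by blast
  have I: "((\<lambda>x. cos (real j * x - e) * ?H x) has_integral 0) {-pi..pi}" if "j \<le> d" for j e
    using has_integral_cos_mult_fejer_cos[OF mN, of j e c] wz[OF that] by simp
  have I0: "(?H has_integral 0) {-pi..pi}"
    using I[of 0 0] by simp
  have "((\<lambda>x. a 0 * ?H x + (\<Sum>k=1..d. a k * (cos (real k * x - 0) * ?H x) +
        b k * (cos (real k * x - pi / 2) * ?H x))) has_integral a 0 * 0 + (\<Sum>k=1..d. a k * 0 + b k * 0)) {-pi..pi}"
    by (intro has_integral_add has_integral_mult_right has_integral_sum I I0) auto
  moreover have "p x * ?H x = a 0 * ?H x + (\<Sum>k=1..d. a k * (cos (real k * x - 0) * ?H x) +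
        b k * (cos (real k * x - pi / 2) * ?H x))" for x
  proof -
    have e: "(a k * cos (real k * x) + b k * sin (real k * x)) * ?H x = a k * (cos (real k * x - 0) * ?H x) + b k * (cos (real k * x - pi/2) * ?H x)" for k
      unfolding sin_eq_cos_minus_pi_half[of "real k * x"] diff_zero by (simp only: distrib_right mult.assoc)
    show ?thesis by (simp only: pe distrib_right[of "a 0"] sum_distrib_right e)
  qed
  ultimately show ?thesis by simp
qed

lemma fejer_dual_bound:
  fixes f p :: "real \<Rightarrow> real" and v :: "nat \<Rightarrow> real"
  assumes mN: "m < N"
    and feq: "\<And>x. f x = (\<Sum>k<R. v k * cos (real (Suc k) * x - c))"
    and p: "p \<in> trig_polys d" and wz: "\<And>j. j \<le> d \<Longrightarrow> fejer_weight N m j = 0"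
    and M: "\<And>x. \<bar>f x - p x\<bar> \<le> M"
  shows "(\<Sum>k<R. v k * (pi * fejer_weight N m (Suc k))) \<le> M * (2 * pi * (real m + 1))"
proof -
  let ?H = "\<lambda>x. fejer_kernel m x * cos (real N * x - c)"
  have If: "((\<lambda>x. f x * ?H x) has_integral (\<Sum>k<R. v k * (pi * fejer_weight N m (Suc k)))) {-pi..pi}"
  proof -
    have "((\<lambda>x. \<Sum>k<R. v k * (cos (real (Suc k) * x - c) * ?H x)) has_integral
        (\<Sum>k<R. v k * (pi * fejer_weight N m (Suc k) * cos (c - c)))) {-pi..pi}"
      by (intro has_integral_sum has_integral_mult_right has_integral_cos_mult_fejer_cos mN) auto
    moreover have "f x * ?H x = (\<Sum>k<R. v k * (cos (real (Suc k) * x - c) * ?H x))" for x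
      unfolding feq sum_distrib_right by (simp add: mult.assoc)
    ultimately show ?thesis by simp
  qed
  have Id: "((\<lambda>x. (f x - p x) * ?H x) has_integral (\<Sum>k<R. v k * (pi * fejer_weight N m (Suc k)))) {-pi..pi}"
    using has_integral_diff[OF If has_integral_trig_poly_mult_fejer_cos[OF mN p wz]]
    by (simp add: algebra_simps)
  have IM: "((\<lambda>x. M * fejer_kernel m x) has_integral M * (2 * pi * (real m + 1))) {-pi..pi}"
    by (intro has_integral_mult_right has_integral_fejer_kernel)
  have le: "(f x - p x) * ?H x \<le> M * fejer_kernel m x" for x
  proof -
    have "(f x - p x) * ?H x \<le> \<bar>f x - p x\<bar> * \<bar>?H x\<bar>" by (metis abs_ge_self abs_mult)
    also have "\<bar>?H x\<bar> \<le> fejer_kernel m x"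
      using fejer_kernel_nonneg[of m x] abs_cos_le_one[of "real N * x - c"] by (simp add: abs_mult mult_left_le)
    then have "\<bar>f x - p x\<bar> * \<bar>?H x\<bar> \<le> M * fejer_kernel m x"
      using M[of x] by (intro mult_mono) auto
    finally show ?thesis .
  qed
  show ?thesis using has_integral_le[OF Id IM] le by blast
qed

lemma test_function_approx_lower_bound:
  fixes \<psi> :: "real \<Rightarrow> real"
  assumes pos: "\<And>t. t \<ge> 1 \<Longrightarrow> \<psi> t > 0"
    and mono: "\<And>s t. 1 \<le> s \<Longrightarrow> s \<le> t \<Longrightarrow> \<psi> t \<le> \<psi> s"
    and su: "summable (\<lambda>k. \<psi> (real (Suc k)))"
    and n: "n \<ge> 1"
    and p: "p \<in> trig_polys (n - 1)"
    and M: "\<And>x. \<bar>test_function \<psi> \<beta> (2 * n) (n - 1) x - p x\<bar> \<le> M"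
  shows "\<psi> (real (4 * n)) * real n / (12 * pi) \<le> M"
proof -
  define N where "N = 2 * n"
  define m where "m = n - 1"
  have mN: "m < N" and m1: "real m + 1 = real n" using n by (auto simp: N_def m_def)
  have u0: "\<psi> (real (Suc k)) \<ge> 0" for k using pos[of "real (Suc k)"] by simp
  let ?v = "\<lambda>k. \<psi> (real (Suc k)) * fejer_weight N m (Suc k) / (2 * pi * (real m + 1))"
  have wz: "fejer_weight N m j = 0" if "j \<le> n - 1" for j
    using that n by (auto simp: fejer_weight_def N_def m_def of_nat_diff)
  have dual: "(\<Sum>k<N + m. ?v k * (pi * fejer_weight N m (Suc k))) \<le> M * (2 * pi * (real m + 1))"
    by (rule fejer_dual_bound[OF mN test_function_eq[OF u0 su mN] p _ M[unfolded N_def[symmetric] m_def[symmetric]]])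
       (use wz in \<open>auto simp: m_def\<close>)
  have pi_cancel: "a / (2 * pi * b) * (pi * c) = a * c / (2 * b)" for a b c :: real
    by (cases "b = 0") (simp_all add: field_simps)
  have dual_sum_eq: "(\<Sum>k<N + m. ?v k * (pi * fejer_weight N m (Suc k))) = (\<Sum>k<N + m. \<psi> (real (Suc k)) * (fejer_weight N m (Suc k))^2) / (2 * (real m + 1))"
    unfolding sum_divide_distrib pi_cancel by (intro sum.cong refl) (simp add: power2_eq_square mult.assoc)
  have psi_4n_le: "\<psi> (real (4 * n)) * (fejer_weight N m (Suc k))^2 \<le> \<psi> (real (Suc k)) * (fejer_weight N m (Suc k))^2" if "k < N + m" for k
    using that n by (intro mult_right_mono mono) (auto simp: N_def m_def)
  have "\<psi> (real (4 * n)) * ((real m + 1) ^ 3 / 3) \<le> \<psi> (real (4 * n)) * (\<Sum>k<N + m. (fejer_weight N m (Suc k))^2)"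
    using sum_fejer_weight_squares_ge[OF mN] pos[of "real (4 * n)"] n by (intro mult_left_mono) auto
  also have "\<dots> \<le> (\<Sum>k<N + m. \<psi> (real (Suc k)) * (fejer_weight N m (Suc k))^2)"
    unfolding sum_distrib_left by (intro sum_mono psi_4n_le) auto
  finally have "\<psi> (real (4 * n)) * ((real m + 1) ^ 3 / 3) / (2 * (real m + 1)) \<le> M * (2 * pi * (real m + 1))"
    using dual unfolding dual_sum_eq by (smt (verit) divide_right_mono of_nat_0_le_iff)
  then have "\<psi> (real (4 * n)) * (real n ^ 3 / 3) / (2 * real n) \<le> M * (2 * pi * real n)" unfolding m1 .
  then have "\<psi> (real (4 * n)) * real n / (12 * pi) * (2 * pi * real n) \<le> M * (2 * pi * real n)"
    using n by (simp add: power3_eq_cube field_simps)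
  then have "real n * \<psi> (real (4 * n)) \<le> 12 * (M * pi)" using n pi_gt_zero by (simp add: mult_le_cancel_right)
  then show ?thesis using pi_gt_zero by (simp add: field_simps)
qed

lemma best_approx_ge:
  fixes \<psi> :: "real \<Rightarrow> real"
  assumes pos: "\<And>t. t \<ge> 1 \<Longrightarrow> \<psi> t > 0"
    and mono: "\<And>s t. 1 \<le> s \<Longrightarrow> s \<le> t \<Longrightarrow> \<psi> t \<le> \<psi> s"
    and su: "summable (\<lambda>k. \<psi> (real (Suc k)))"
    and n: "n \<ge> 1"
  shows "ereal (\<psi> (real (4 * n)) * real n / (12 * pi)) \<le> best_approx \<psi> \<beta> n"
proof -
  let ?f = "test_function \<psi> \<beta> (2 * n) (n - 1)"
  have f: "?f \<in> C_class \<psi> \<beta>"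
    using n by (intro test_function_in_C_class) auto
  have approx: "ereal (\<psi> (real (4 * n)) * real n / (12 * pi)) \<le>
      (INF p\<in>trig_polys (n - 1). sup_norm (\<lambda>x. ?f x - p x))"
  proof (rule INF_greatest, rule sup_norm_ge)
    fix p M assume "p \<in> trig_polys (n - 1)" and "\<forall>x. \<bar>?f x - p x\<bar> \<le> M"
    then show "\<psi> (real (4 * n)) * real n / (12 * pi) \<le> M"
      by (intro test_function_approx_lower_bound[OF pos mono su n]) auto
  qed
  show ?thesis
    unfolding best_approx_def by (rule SUP_upper2[OF f]) (rule approx)
qed

section \<open>The classes \<open>B\<close> and \<open>\<Theta>\<^sub>1\<close>\<close>

lemma class_B_pos: "\<psi> \<in> class_B \<Longrightarrow> t \<ge> 1 \<Longrightarrow> \<psi> t > 0"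
  unfolding class_B_def by auto

lemma class_B_antimono: "\<psi> \<in> class_B \<Longrightarrow> 1 \<le> s \<Longrightarrow> s \<le> t \<Longrightarrow> \<psi> t \<le> \<psi> s"
  unfolding class_B_def by auto

lemma class_Theta1E:
  assumes "\<psi> \<in> class_Theta1"
  obtains \<alpha> K where "\<alpha> > 1" "K > 0"
    "\<And>t1 t2. t1 > t2 \<Longrightarrow> t2 \<ge> 1 \<Longrightarrow> t1 powr \<alpha> * \<psi> t1 \<le> K * (t2 powr \<alpha> * \<psi> t2)"
  using assms unfolding class_Theta1_def by blast

lemma class_B_quadruple_bound:
  assumes B: "\<psi> \<in> class_B"
  obtains L where "L > 0" "\<And>t. t \<ge> 1 \<Longrightarrow> \<psi> t \<le> L * \<psi> (4 * t)"
proof -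
  obtain KB where KB: "\<And>t. t \<ge> 1 \<Longrightarrow> \<psi> t / \<psi> (2 * t) \<le> KB"
    using B unfolding class_B_def by auto
  have dbl: "\<psi> t \<le> KB * \<psi> (2 * t)" if "t \<ge> 1" for t
    using KB[OF that] class_B_pos[OF B, of "2 * t"] that by (simp add: field_simps)
  have KB1: "KB \<ge> 1"
  proof -
    have "\<psi> 2 * 1 \<le> \<psi> 2 * KB"
      using dbl[of 1] class_B_antimono[OF B, of 1 2] by (simp add: mult.commute)
    then show ?thesis using class_B_pos[OF B, of 2] by simp
  qed
  show ?thesis
  proof (rule that[of "KB * KB"])
    show "KB * KB > 0" using KB1 by simp
    fix t :: real assume t: "t \<ge> 1"
    have "\<psi> t \<le> KB * \<psi> (2 * t)" using dbl t by simp
    also have "\<dots> \<le> KB * (KB * \<psi> (2 * (2 * t)))"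
      using dbl[of "2 * t"] t KB1 by (intro mult_left_mono) auto
    finally show "\<psi> t \<le> KB * KB * \<psi> (4 * t)" by (simp add: mult.assoc)
  qed
qed

lemma Fourier_error_upper_bound:
  assumes B: "\<psi> \<in> class_B" and T: "\<psi> \<in> class_Theta1"
  obtains K1 where "K1 > 0" "\<And>\<beta> n. n \<ge> 1 \<Longrightarrow> Fourier_error \<psi> \<beta> n \<le> ereal (K1 * \<psi> (real n) * real n)"
proof -
  obtain \<alpha> K where a: "\<alpha> > 1" and K: "K > 0"
    and H: "\<And>t1 t2. t1 > t2 \<Longrightarrow> t2 \<ge> 1 \<Longrightarrow> t1 powr \<alpha> * \<psi> t1 \<le> K * (t2 powr \<alpha> * \<psi> t2)"
    using class_Theta1E[OF T] by blast
  show ?thesis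
  proof (rule that[of "1 + K / (\<alpha> - 1)"])
    show "1 + K / (\<alpha> - 1) > 0" using a K by (simp add: add_pos_pos)
    show "Fourier_error \<psi> \<beta> n \<le> ereal ((1 + K / (\<alpha> - 1)) * \<psi> (real n) * real n)" if "n \<ge> 1" for \<beta> n
      by (rule Fourier_error_le[OF class_B_pos[OF B] a K H that])
  qed
qed

lemma best_approx_lower_bound:
  assumes B: "\<psi> \<in> class_B" and T: "\<psi> \<in> class_Theta1"
  obtains K2 where "K2 > 0" "\<And>\<beta> n. n \<ge> 1 \<Longrightarrow> ereal (K2 * \<psi> (real n) * real n) \<le> best_approx \<psi> \<beta> n"
proof -
  note pos = class_B_pos[OF B] and mono = class_B_antimono[OF B]
  obtain L where L: "L > 0" "\<And>t. t \<ge> 1 \<Longrightarrow> \<psi> t \<le> L * \<psi> (4 * t)"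
    using class_B_quadruple_bound[OF B] by blast
  obtain \<alpha> K where a: "\<alpha> > 1" and K: "K > 0"
    and H: "\<And>t1 t2. t1 > t2 \<Longrightarrow> t2 \<ge> 1 \<Longrightarrow> t1 powr \<alpha> * \<psi> t1 \<le> K * (t2 powr \<alpha> * \<psi> t2)"
    using class_Theta1E[OF T] by blast
  have su: "summable (\<lambda>k. \<psi> (real (Suc k)))"
    using Theta1_tail_bound(1)[OF pos a K H, of 1] by simp
  show ?thesis
  proof (rule that[of "1 / (12 * pi * L)"])
    show "1 / (12 * pi * L) > 0" using L(1) by simp
    fix \<beta> and n :: nat assume n: "n \<ge> 1"
    have "\<psi> (real n) * real n \<le> L * (\<psi> (real (4 * n)) * real n)"
      using L(2)[of "real n"] n by (simp add: mult_right_mono mult.assoc[symmetric])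
    then have "\<psi> (real n) * real n / (12 * pi * L) \<le> L * (\<psi> (real (4 * n)) * real n) / (12 * pi * L)"
      using L(1) by (intro divide_right_mono) auto
    also have "\<dots> = \<psi> (real (4 * n)) * real n / (12 * pi)"
      using L(1) by simp
    finally have "ereal (1 / (12 * pi * L) * \<psi> (real n) * real n) \<le> ereal (\<psi> (real (4 * n)) * real n / (12 * pi))"
      by simp
    also have "\<dots> \<le> best_approx \<psi> \<beta> n"
      by (rule best_approx_ge[OF pos mono su n])
    finally show "ereal (1 / (12 * pi * L) * \<psi> (real n) * real n) \<le> best_approx \<psi> \<beta> n" .
  qed
qed

theorem theorem2:
  fixes \<psi> :: "real \<Rightarrow> real"
  assumes "continuous_on {1..} \<psi>"
    and "\<psi> \<in> class_B" and "\<psi> \<in> class_Theta1"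
    and "(\<forall>k\<ge>1. Delta2_inv \<psi> k \<ge> 0) \<or> (\<forall>k\<ge>1. Delta2_inv \<psi> k \<le> 0)"
  shows "\<exists>K1 K2. K1 > 0 \<and> K2 > 0 \<and> (\<forall>\<beta>::real. \<forall>n::nat. n \<ge> 1 \<longrightarrow>
           ereal (K2 * \<psi> (real n) * real n) \<le> best_approx \<psi> \<beta> n \<and>
           best_approx \<psi> \<beta> n \<le> Fourier_error \<psi> \<beta> n \<and>
           Fourier_error \<psi> \<beta> n \<le> ereal (K1 * \<psi> (real n) * real n))"
proof -
  obtain K1 where "K1 > 0" "\<And>\<beta> n. n \<ge> 1 \<Longrightarrow> Fourier_error \<psi> \<beta> n \<le> ereal (K1 * \<psi> (real n) * real n)"
    using Fourier_error_upper_bound[OF assms(2,3)] by blast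
  moreover obtain K2 where "K2 > 0"
    "\<And>\<beta> n. n \<ge> 1 \<Longrightarrow> ereal (K2 * \<psi> (real n) * real n) \<le> best_approx \<psi> \<beta> n"
    using best_approx_lower_bound[OF assms(2,3)] by blast
  ultimately show ?thesis
    using best_approx_le_Fourier_error by blast
qed

end
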